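(* Let $q_1(\bar x,\mathrm{cntd}(y))\,{:}{-}\,A_1\wedge C_1$ and $q_2(\bar x,\mathrm{cntd}(y))\,{:}{-}\,A_2\wedge C_2$ be count-distinct queries. If $\mathrm{core}(q_1)$ and $\mathrm{core}(q_2)$ are isomorphic (via a bijection fixing every variable of $\bar x$ and $y$), then $q_1$ and $q_2$ are equivalent.
   Context: Fix a dense linearly ordered domain $\Delta$ of constants. A database instance is a finite set of facts over $\Delta$. A conjunctive query with comparisons (CQC) $q(\bar u)\,{:}{-}\,A\wedge C$ has distinguished variables $\bar u$, a finite set $A$ of relational atoms over variables and constants, and a finite set $C$ of comparisons $s\,\rho\,t$, $\rho\in\{=,<,\le\}$. $C\models s\,\rho\,t$ means every assignment to $\Delta$ satisfying $C$ satisfies $s\,\rho\,t$. A homomorphism $q_1\to_{\bar u}q_2$ is a map $h$ from terms of $q_1$ to terms of $q_2$, identity on constants and on $\bar u$, with $h(A_1)\subseteq A_2$ and $C_2\models h(r)\,\rho\,h(s)$ for all $r\,\rho\,s\in C_1$; an isomorphism is a bijection on variables fixing $\bar u$ and constants with $h(A_1)=A_2$, $h(C_1)=C_2$. $\mathrm{ext}(q)$ replaces $C$ by $\{r\,\rho\,s: r,s\text{ terms of }q,\ C\models r\,\rho\,s\}$. A core of $q$ is a CQC $q'$ with (1) $q\to_{\bar u}q'$; (2) for every $q''$ with $q\to_{\bar u}q''$ and $q''\to_{\bar u}q$ there is an injective homomorphism $q'\to_{\bar u}q''$; (3) $q'=\mathrm{ext}(q')$. A count-distinct query $q(\bar x,\mathrm{cntd}(y))\,{:}{-}\,A(\bar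 x,y,\bar z)\wedge C(\bar x,y,\bar z)$ ($y\notin\bar x$) returns on $I$, for each tuple $\bar d$ in the answer of the CQC $q(\bar x)\,{:}{-}\,A\wedge C$, the pair $(\bar d,k)$ with $k$ the number of distinct values $\theta(y)$ over all assignments $\theta$ with $\theta(A)\subseteq I$, $\theta$ satisfying $C$, and $\theta(\bar x)=\bar d$; two such queries are equivalent if they give the same output on all instances. $\mathrm{core}(q)$ is the core of the CQC $q(\bar x,y)\,{:}{-}\,A\wedge C$, read as a count-distinct query on $y$. *)

theory Defs
  imports Main "HOL-Library.Extended_Nat"
begin

datatype ('v, 'd) trm = Var 'v | Cst 'd

datatype cop = CEq | CLt | CLe

type_synonym ('v, 'd) cmp = "('v, 'd) trm \<times> cop \<times> ('v, 'd) trm"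
type_synonym ('r, 'v, 'd) atom = "'r \<times> ('v, 'd) trm list"
type_synonym ('r, 'd) fact = "'r \<times> 'd list"

record ('r, 'v, 'd) cqc =
  head  :: "'v list"
  atoms :: "('r, 'v, 'd) atom set"
  comps :: "('v, 'd) cmp set"

definition is_cqc :: "('r, 'v, 'd) cqc \<Rightarrow> bool" where
  "is_cqc q \<longleftrightarrow> finite (atoms q) \<and> finite (comps q)"

fun eval :: "('v \<Rightarrow> 'd) \<Rightarrow> ('v, 'd) trm \<Rightarrow> 'd" where
  "eval \<theta> (Var v) = \<theta> v"
| "eval \<theta> (Cst c) = c"

fun sat_cop :: "cop \<Rightarrow> 'd::linorder \<Rightarrow> 'd \<Rightarrow> bool" where
  "sat_cop CEq a b = (a = b)"
| "sat_cop CLt a b = (a < b)"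
| "sat_cop CLe a b = (a \<le> b)"

fun sat_cmp :: "('v \<Rightarrow> 'd::linorder) \<Rightarrow> ('v, 'd) cmp \<Rightarrow> bool" where
  "sat_cmp \<theta> (r, \<rho>, s) = sat_cop \<rho> (eval \<theta> r) (eval \<theta> s)"

definition entails :: "('v, 'd::linorder) cmp set \<Rightarrow> ('v, 'd) cmp \<Rightarrow> bool" where
  "entails C c \<longleftrightarrow> (\<forall>\<theta> :: 'v \<Rightarrow> 'd. (\<forall>c'\<in>C. sat_cmp \<theta> c') \<longrightarrow> sat_cmp \<theta> c)"

fun subst :: "('v \<Rightarrow> ('w, 'd) trm) \<Rightarrow> ('v, 'd) trm \<Rightarrow> ('w, 'd) trm" where
  "subst g (Var v) = g v"
| "subst g (Cst c) = Cst c"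

fun subst_atom :: "('v \<Rightarrow> ('w, 'd) trm) \<Rightarrow> ('r, 'v, 'd) atom \<Rightarrow> ('r, 'w, 'd) atom" where
  "subst_atom g (R, ts) = (R, map (subst g) ts)"

fun subst_cmp :: "('v \<Rightarrow> ('w, 'd) trm) \<Rightarrow> ('v, 'd) cmp \<Rightarrow> ('w, 'd) cmp" where
  "subst_cmp g (r, \<rho>, s) = (subst g r, \<rho>, subst g s)"

definition terms :: "('r, 'v, 'd) cqc \<Rightarrow> ('v, 'd) trm set" where
  "terms q = (\<Union>(R, ts)\<in>atoms q. set ts) \<union> (\<Union>(r, \<rho>, s)\<in>comps q. {r, s})
             \<union> Var ` set (head q)"

definition vars :: "('r, 'v, 'd) cqc \<Rightarrow> 'v set" where
  "vars q = {v. Var v \<in> terms q}"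

definition hom :: "('v \<Rightarrow> ('v, 'd) trm) \<Rightarrow> ('r, 'v, 'd::linorder) cqc \<Rightarrow> ('r, 'v, 'd) cqc \<Rightarrow> bool" where
  "hom g q1 q2 \<longleftrightarrow> head q1 = head q2
     \<and> (\<forall>u\<in>set (head q1). g u = Var u)
     \<and> subst_atom g ` atoms q1 \<subseteq> atoms q2
     \<and> (\<forall>c\<in>comps q1. entails (comps q2) (subst_cmp g c))"

definition has_hom :: "('r, 'v, 'd::linorder) cqc \<Rightarrow> ('r, 'v, 'd) cqc \<Rightarrow> bool" where
  "has_hom q1 q2 \<longleftrightarrow> (\<exists>g. hom g q1 q2)"

definition has_inj_hom :: "('r, 'v, 'd::linorder) cqc \<Rightarrow> ('r, 'v, 'd) cqc \<Rightarrow> bool" where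
  "has_inj_hom q1 q2 \<longleftrightarrow> (\<exists>g. hom g q1 q2 \<and> inj_on (subst g) (terms q1))"

definition iso :: "('v \<Rightarrow> 'v) \<Rightarrow> ('r, 'v, 'd) cqc \<Rightarrow> ('r, 'v, 'd) cqc \<Rightarrow> bool" where
  "iso f q1 q2 \<longleftrightarrow> head q1 = head q2
     \<and> bij_betw f (vars q1) (vars q2)
     \<and> (\<forall>u\<in>set (head q1). f u = u)
     \<and> subst_atom (Var \<circ> f) ` atoms q1 = atoms q2
     \<and> subst_cmp (Var \<circ> f) ` comps q1 = comps q2"

definition ext :: "('r, 'v, 'd::linorder) cqc \<Rightarrow> ('r, 'v, 'd) cqc" where
  "ext q = q\<lparr>comps := {(r, \<rho>, s). r \<in> terms q \<and> s \<in> terms q \<and> entails (comps q) (r, \<rho>, s)}\<rparr>"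

definition is_core :: "('r, 'v, 'd::linorder) cqc \<Rightarrow> ('r, 'v, 'd) cqc \<Rightarrow> bool" where
  "is_core q q' \<longleftrightarrow> is_cqc q'
     \<and> has_hom q q'
     \<and> (\<forall>q''. is_cqc q'' \<and> has_hom q q'' \<and> has_hom q'' q \<longrightarrow> has_inj_hom q' q'')
     \<and> q' = ext q'"

record ('r, 'v, 'd) cdq =
  cd_head  :: "'v list"
  cd_var   :: "'v"
  cd_atoms :: "('r, 'v, 'd) atom set"
  cd_comps :: "('v, 'd) cmp set"

definition is_cdq :: "('r, 'v, 'd) cdq \<Rightarrow> bool" where
  "is_cdq q \<longleftrightarrow> finite (cd_atoms q) \<and> finite (cd_comps q) \<and> cd_var q \<notin> set (cd_head q)"

(* the CQC q(xs, y) :- A /\ C whose core is core(q) *)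
definition cdq_cqc :: "('r, 'v, 'd) cdq \<Rightarrow> ('r, 'v, 'd) cqc" where
  "cdq_cqc q = \<lparr>head = cd_head q @ [cd_var q], atoms = cd_atoms q, comps = cd_comps q\<rparr>"

definition body_sat ::
  "('r, 'd) fact set \<Rightarrow> ('v \<Rightarrow> 'd::linorder) \<Rightarrow> ('r, 'v, 'd) atom set \<Rightarrow> ('v, 'd) cmp set \<Rightarrow> bool" where
  "body_sat I \<theta> A C \<longleftrightarrow> (\<lambda>(R, ts). (R, map (eval \<theta>) ts)) ` A \<subseteq> I \<and> (\<forall>c\<in>C. sat_cmp \<theta> c)"

definition ecard :: "'a set \<Rightarrow> enat" where
  "ecard S = (if finite S then enat (card S) else \<infinity>)"

definition cd_output :: "('r, 'v, 'd::linorder) cdq \<Rightarrow> ('r, 'd) fact set \<Rightarrow> ('d list \<times> enat) set" where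
  "cd_output q I =
     {(ds, ecard {\<theta> (cd_var q) | \<theta>. body_sat I \<theta> (cd_atoms q) (cd_comps q) \<and> map \<theta> (cd_head q) = ds})
      | ds. \<exists>\<theta>. body_sat I \<theta> (cd_atoms q) (cd_comps q) \<and> map \<theta> (cd_head q) = ds}"

definition cd_equiv :: "('r, 'v, 'd::linorder) cdq \<Rightarrow> ('r, 'v, 'd) cdq \<Rightarrow> bool" where
  "cd_equiv q1 q2 \<longleftrightarrow> (\<forall>I :: ('r, 'd) fact set. finite I \<longrightarrow> cd_output q1 I = cd_output q2 I)"

end

theory Submission
  imports Defs
begin

text \<open>The output of a count-distinct query on \<open>I\<close> is determined by the answers of the CQC
  \<open>q(x\<^sub>1,\<dots>,x\<^sub>n,y)\<close> on \<open>I\<close>: group the answer tuples by their prefix and count the last entries.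
  A homomorphism \<open>q\<^sub>1 \<rightarrow> q\<^sub>2\<close> turns every satisfying assignment of \<open>q\<^sub>2\<close> into one of \<open>q\<^sub>1\<close>
  with the same head values, so CQCs with homomorphisms in both directions have the same
  answers. This applies to a CQC and its core (the core maps back into the query, by minimality
  against the query itself) and to two isomorphic cores.\<close>

lemma subst_Var [simp]: "subst Var = id"
proof
  show "subst Var t = id t" for t :: "('v, 'd) trm"
    by (cases t) auto
qed

lemma eval_subst: "eval \<theta> (subst g t) = eval (\<lambda>v. eval \<theta> (g v)) t"
  by (cases t) auto

lemma sat_cmp_subst_cmp: "sat_cmp \<theta> (subst_cmp g c) = sat_cmp (\<lambda>v. eval \<theta> (g v)) c"
  by (cases c) (auto simp: eval_subst)

lemma entails_of_mem: "c \<in> C \<Longrightarrow> entails C c"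
  by (auto simp: entails_def)

definition answers :: "('r, 'd) fact set \<Rightarrow> ('r, 'v, 'd::linorder) cqc \<Rightarrow> 'd list set" where
  "answers I q = {map \<theta> (head q) | \<theta>. body_sat I \<theta> (atoms q) (comps q)}"

lemma body_sat_hom:
  assumes "hom g q1 q2" and "body_sat I \<theta> (atoms q2) (comps q2)"
  shows "body_sat I (\<lambda>v. eval \<theta> (g v)) (atoms q1) (comps q1)"
  unfolding body_sat_def
proof (intro conjI subsetI ballI)
  fix x assume "x \<in> (\<lambda>(R, ts). (R, map (eval (\<lambda>v. eval \<theta> (g v))) ts)) ` atoms q1"
  then obtain R ts where "(R, ts) \<in> atoms q1" and x: "x = (R, map (eval (\<lambda>v. eval \<theta> (g v))) ts)"
    by auto
  then have "(R, map (subst g) ts) \<in> atoms q2"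
    using assms(1) by (force simp: hom_def)
  then have "(R, map (eval \<theta> \<circ> subst g) ts) \<in> I"
    using assms(2) by (force simp: body_sat_def)
  then show "x \<in> I"
    by (simp add: x comp_def eval_subst)
next
  fix c assume "c \<in> comps q1"
  then have "entails (comps q2) (subst_cmp g c)"
    using assms(1) by (auto simp: hom_def)
  then have "sat_cmp \<theta> (subst_cmp g c)"
    using assms(2) by (auto simp: entails_def body_sat_def)
  then show "sat_cmp (\<lambda>v. eval \<theta> (g v)) c"
    by (simp add: sat_cmp_subst_cmp)
qed

lemma answers_hom_subset:
  assumes "hom g q1 q2"
  shows "answers I q2 \<subseteq> answers I q1"
proof
  fix ds assume "ds \<in> answers I q2"
  then obtain \<theta> where ds: "ds = map \<theta> (head q2)" and sat: "body_sat I \<theta> (atoms q2) (comps q2)"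
    by (auto simp: answers_def)
  have "map (\<lambda>v. eval \<theta> (g v)) (head q1) = ds"
    using assms ds by (auto simp: hom_def)
  with body_sat_hom[OF assms sat] show "ds \<in> answers I q1"
    by (auto simp: answers_def)
qed

lemma hom_Var: "hom Var q q"
  by (auto simp: hom_def entails_of_mem)

lemma answers_core:
  assumes "is_cqc q" and "is_core q c"
  shows "answers I c = answers I q"
proof -
  obtain g where "hom g q c"
    using assms(2) by (auto simp: is_core_def has_hom_def)
  moreover have "has_inj_hom c q"
    using assms hom_Var by (auto simp: is_core_def has_hom_def)
  then obtain h where "hom h c q"
    by (auto simp: has_inj_hom_def)
  ultimately show ?thesis
    using answers_hom_subset by blast
qed

lemma hom_iso:
  assumes "iso f q1 q2"
  shows "hom (Var \<circ> f) q1 q2"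
  unfolding hom_def
proof (intro conjI ballI)
  fix c assume "c \<in> comps q1"
  then show "entails (comps q2) (subst_cmp (Var \<circ> f) c)"
    using assms by (auto simp: iso_def intro: entails_of_mem)
qed (use assms in \<open>auto simp: iso_def\<close>)

lemma subst_inv_into_subst:
  assumes "inj_on f (vars q)" and "t \<in> terms q"
  shows "subst (Var \<circ> inv_into (vars q) f) (subst (Var \<circ> f) t) = t"
  using assms by (cases t) (auto simp: vars_def)

lemma iso_inv_into:
  assumes "iso f q1 q2"
  shows "iso (inv_into (vars q1) f) q2 q1"
proof -
  let ?g = "inv_into (vars q1) f"
  have bij: "bij_betw f (vars q1) (vars q2)" and head: "head q1 = head q2"
    and fix_head: "\<forall>u\<in>set (head q1). f u = u"
    and atoms: "subst_atom (Var \<circ> f) ` atoms q1 = atoms q2"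
    and comps: "subst_cmp (Var \<circ> f) ` comps q1 = comps q2"
    using assms by (auto simp: iso_def)
  have inj: "inj_on f (vars q1)"
    using bij by (rule bij_betw_imp_inj_on)
  have "u \<in> vars q1" if "u \<in> set (head q1)" for u
    using that by (auto simp: vars_def terms_def)
  then have "\<forall>u\<in>set (head q2). ?g u = u"
    using fix_head head inj by (metis inv_into_f_f)
  moreover have "subst_atom (Var \<circ> ?g) (subst_atom (Var \<circ> f) a) = a" if "a \<in> atoms q1" for a
  proof -
    obtain R ts where a: "a = (R, ts)" by fastforce
    have "set ts \<subseteq> terms q1"
      using that a by (force simp: terms_def)
    then have "map (subst (Var \<circ> ?g) \<circ> subst (Var \<circ> f)) ts = ts"
      using subst_inv_into_subst[OF inj] by (auto intro!: map_idI)
    then show ?thesis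
      using a by simp
  qed
  then have "subst_atom (Var \<circ> ?g) ` atoms q2 = atoms q1"
    by (simp add: atoms[symmetric] image_comp)
  moreover have "subst_cmp (Var \<circ> ?g) (subst_cmp (Var \<circ> f) c) = c" if "c \<in> comps q1" for c
  proof -
    obtain r \<rho> s where c: "c = (r, \<rho>, s)" by (cases c) auto
    have "r \<in> terms q1" "s \<in> terms q1"
      using that c by (force simp: terms_def)+
    then show ?thesis
      using c subst_inv_into_subst[OF inj] by simp
  qed
  then have "subst_cmp (Var \<circ> ?g) ` comps q2 = comps q1"
    by (simp add: comps[symmetric] image_comp)
  ultimately show ?thesis
    using head bij_betw_inv_into[OF bij] by (simp add: iso_def)
qed

lemma answers_iso: "iso f q1 q2 \<Longrightarrow> answers I q1 = answers I q2"
  by (metis answers_hom_subset hom_iso iso_inv_into subset_antisym)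

definition count_last :: "'d list set \<Rightarrow> ('d list \<times> enat) set" where
  "count_last S = {(ds, ecard {d. ds @ [d] \<in> S}) | ds. \<exists>d. ds @ [d] \<in> S}"

lemma cd_output_eq_count_last: "cd_output q I = count_last (answers I (cdq_cqc q))"
proof -
  have answers: "answers I (cdq_cqc q) =
      {map \<theta> (cd_head q) @ [\<theta> (cd_var q)] | \<theta>. body_sat I \<theta> (cd_atoms q) (cd_comps q)}"
    by (simp add: answers_def cdq_cqc_def)
  have "{\<theta> (cd_var q) | \<theta>. body_sat I \<theta> (cd_atoms q) (cd_comps q) \<and> map \<theta> (cd_head q) = ds}
      = {d. ds @ [d] \<in> answers I (cdq_cqc q)}" for ds
    unfolding answers by auto
  moreover have "(\<exists>\<theta>. body_sat I \<theta> (cd_atoms q) (cd_comps q) \<and> map \<theta> (cd_head q) = ds)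
      = (\<exists>d. ds @ [d] \<in> answers I (cdq_cqc q))" for ds
    unfolding answers by auto
  ultimately show ?thesis
    unfolding cd_output_def count_last_def by simp
qed

lemma is_cqc_cdq_cqc: "is_cdq q \<Longrightarrow> is_cqc (cdq_cqc q)"
  by (simp add: is_cdq_def is_cqc_def cdq_cqc_def)

theorem mainTheorem6:
  fixes q1 q2 :: "('r, 'v, 'd::dense_linorder) cdq"
    and c1 c2 :: "('r, 'v, 'd) cqc"
    and f :: "'v \<Rightarrow> 'v"
  assumes "is_cdq q1" and "is_cdq q2"
    and "cd_head q1 = cd_head q2" and "cd_var q1 = cd_var q2"
    and "is_core (cdq_cqc q1) c1" and "is_core (cdq_cqc q2) c2"
    and "iso f c1 c2"
  shows "cd_equiv q1 q2"
proof -
  have "answers I (cdq_cqc q1) = answers I (cdq_cqc q2)" for I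
  proof -
    have "answers I (cdq_cqc q1) = answers I c1"
      using answers_core[OF is_cqc_cdq_cqc[OF assms(1)] assms(5)] by simp
    also have "\<dots> = answers I c2"
      using answers_iso[OF assms(7)] .
    also have "\<dots> = answers I (cdq_cqc q2)"
      using answers_core[OF is_cqc_cdq_cqc[OF assms(2)] assms(6)] .
    finally show ?thesis .
  qed
  then show ?thesis
    by (simp add: cd_equiv_def cd_output_eq_count_last)
qed

end
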